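(* Let $G$ be a finite group and let $N$ be the last term of its descending (lower) central series. Let $I$ be any set and $H=G^I$. Let $(X_m)_{m\in\mathbf{N}}$ be an increasing sequence of subsets of $H$ such that $\mathcal{G}(X_m)\subseteq X_{m+1}$ for all $m$ and $\bigcup_m X_m=H$. Then $N^I\subseteq X_m$ for all $m$ large enough.
   Context: For a subset $X$ of a group, $\mathcal{G}(X)=X\cup\{1\}\cup\{x^{-1}: x\in X\}\cup\{xy : x,y\in X\}$. *)

theory Defs
  imports "HOL-Algebra.Algebra"
begin

definition comm_subgroup :: "('a, 'b) monoid_scheme \<Rightarrow> 'a set \<Rightarrow> 'a set \<Rightarrow> 'a set" where
  "comm_subgroup G A B = generate G (\<Union>a\<in>A. \<Union>b\<in>B.
      {a \<otimes>\<^bsub>G\<^esub> b \<otimes>\<^bsub>G\<^esub> inv\<^bsub>G\<^esub> a \<otimes>\<^bsub>G\<^esub> inv\<^bsub>G\<^esub> b})"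

fun lower_central :: "('a, 'b) monoid_scheme \<Rightarrow> nat \<Rightarrow> 'a set" where
  "lower_central G 0 = carrier G"
| "lower_central G (Suc k) = comm_subgroup G (lower_central G k) (carrier G)"

text \<open>The last term of the lower central series; for a finite group the series is
  decreasing and stabilises, so the last term is the intersection of all terms.\<close>
definition lcs_last :: "('a, 'b) monoid_scheme \<Rightarrow> 'a set" where
  "lcs_last G = (\<Inter>k. lower_central G k)"

definition gstep :: "('a, 'b) monoid_scheme \<Rightarrow> 'a set \<Rightarrow> 'a set" where
  "gstep K A = A \<union> {\<one>\<^bsub>K\<^esub>} \<union> (\<lambda>x. inv\<^bsub>K\<^esub> x) ` A
      \<union> (\<lambda>(x, y). x \<otimes>\<^bsub>K\<^esub> y) ` (Sigma A (\<lambda>_. A))"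

end

theory Submission
  imports Defs "HOL-Library.Nat_Bijection" "HOL-Library.Disjoint_Sets"
begin

(* Since G is finite, its lower central series stabilises at N, so [N, G] = N; with N finite this
   yields one list g_1, ..., g_L in G such that every element of N is a product
   [c_1, g_1] ... [c_L, g_L] with all c_l in N.
   Call A a subset of I reached if the copy of N^A in G^I lies in some S m. Reached sets are closed
   under finite unions and under subsets. If I were not reached, splitting an unreached set along the
   fibres of one of its elements gives infinitely many pairwise disjoint unreached sets E_j. Choose
   y_j in N^(E_j) outside a sufficiently late S (b j) and glue them into one w in N^I. Writing
   w = [Z_1, g_1] ... [Z_L, g_L] coordinatewise, the finitely many Z_l lie in some S q, and projecting
   onto E_q writes y_q as a product of L commutators of elements of an early S m, so y_q lies in
   S (b q), a contradiction. *)

lemma decreasing_finite_sets_stabilise: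
  fixes f :: "nat \<Rightarrow> 'a set"
  assumes dec: "\<And>k. f (Suc k) \<subseteq> f k" and fin: "finite (f 0)"
  shows "\<exists>K. f (Suc K) = f K"
proof -
  obtain K where K: "\<And>k. card (f K) \<le> card (f k)"
    using ex_has_least_nat[of "\<lambda>_. True" 0 "\<lambda>k. card (f k)"] by blast
  have "finite (f K)"
    using fin lift_Suc_antimono_le[of f, OF dec, of 0 K] finite_subset by blast
  then have "f (Suc K) = f K"
    using card_subset_eq[OF _ dec[of K]] K[of "Suc K"] card_mono[OF _ dec[of K]] by (simp add: le_antisym)
  then show ?thesis ..
qed

definition commutator :: "('a, 'b) monoid_scheme \<Rightarrow> 'a \<Rightarrow> 'a \<Rightarrow> 'a" where
  "commutator G a b = a \<otimes>\<^bsub>G\<^esub> b \<otimes>\<^bsub>G\<^esub> inv\<^bsub>G\<^esub> a \<otimes>\<^bsub>G\<^esub> inv\<^bsub>G\<^esub> b"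

lemma comm_subgroup_eq_generate_commutators:
  "comm_subgroup G A B = generate G (\<Union>a\<in>A. \<Union>b\<in>B. {commutator G a b})"
  by (simp add: comm_subgroup_def commutator_def)

context group begin

lemma commutator_closed [intro, simp]:
  "a \<in> carrier G \<Longrightarrow> b \<in> carrier G \<Longrightarrow> commutator G a b \<in> carrier G"
  by (simp add: commutator_def)

lemma inv_commutator:
  assumes "c \<in> carrier G" "g \<in> carrier G"
  shows "inv (commutator G c g) = commutator G (inv c) (c \<otimes> g \<otimes> inv c)"
  using assms by (simp add: commutator_def inv_mult_group m_assoc) (simp add: m_assoc[symmetric])

lemma lower_central_subset_carrier: "lower_central G k \<subseteq> carrier G"
  by (induction k) (auto simp: comm_subgroup_eq_generate_commutators intro!: generate_incl)

lemma lower_central_Suc_subset: "lower_central G (Suc k) \<subseteq> lower_central G k"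
proof (induction k)
  case 0
  show ?case using lower_central_subset_carrier[of 1] by simp
next
  case (Suc k)
  then show ?case
    unfolding lower_central.simps comm_subgroup_eq_generate_commutators
    by (intro mono_generate) blast
qed

lemma lcs_last_perfect:
  assumes "finite (carrier G)"
  shows "comm_subgroup G (lcs_last G) (carrier G) = lcs_last G"
proof -
  obtain K where K: "lower_central G (Suc K) = lower_central G K"
    using decreasing_finite_sets_stabilise[of "lower_central G"] lower_central_Suc_subset assms
    by auto
  have const: "lower_central G (K + j) = lower_central G K" for j
    by (induction j) (simp_all add: K[simplified])
  have "lcs_last G = lower_central G K"
    unfolding lcs_last_def
  proof (intro antisym INF_greatest)
    fix k
    show "lower_central G K \<subseteq> lower_central G k"
      using const[of k] lift_Suc_antimono_le[of "lower_central G", OF lower_central_Suc_subset, of k "K + k"]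
      by simp
  qed auto
  then show ?thesis using K by simp
qed

lemma subgroup_lcs_last:
  assumes "finite (carrier G)"
  shows "subgroup (lcs_last G) G"
proof -
  have "lcs_last G \<subseteq> carrier G"
    unfolding lcs_last_def by (metis INT_lower UNIV_I lower_central.simps(1))
  then have "subgroup (comm_subgroup G (lcs_last G) (carrier G)) G"
    unfolding comm_subgroup_eq_generate_commutators by (intro generate_is_subgroup) blast
  then show ?thesis using lcs_last_perfect[OF assms] by simp
qed

end

lemma set_zip_subset_times: "set xs \<subseteq> A \<Longrightarrow> set ys \<subseteq> B \<Longrightarrow> set (zip xs ys) \<subseteq> A \<times> B"
  by (auto dest: set_zip_leftD set_zip_rightD)

fun comm_prod :: "('a, 'b) monoid_scheme \<Rightarrow> ('a \<times> 'a) list \<Rightarrow> 'a" where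
  "comm_prod G [] = \<one>\<^bsub>G\<^esub>"
| "comm_prod G ((c, g) # ps) = commutator G c g \<otimes>\<^bsub>G\<^esub> comm_prod G ps"

definition comm_prods :: "('a, 'b) monoid_scheme \<Rightarrow> 'a set \<Rightarrow> 'a list \<Rightarrow> 'a set" where
  "comm_prods G A gs = {comm_prod G (zip cs gs) | cs. length cs = length gs \<and> set cs \<subseteq> A}"

context group begin

lemma comm_prod_closed [intro, simp]:
  "set ps \<subseteq> carrier G \<times> carrier G \<Longrightarrow> comm_prod G ps \<in> carrier G"
  by (induction ps) auto

lemma comm_prod_append:
  assumes "set ps \<subseteq> carrier G \<times> carrier G" "set qs \<subseteq> carrier G \<times> carrier G"
  shows "comm_prod G (ps @ qs) = comm_prod G ps \<otimes> comm_prod G qs"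
  using assms by (induction ps) (auto simp: m_assoc)

lemma comm_prod_one_left:
  "set gs \<subseteq> carrier G \<Longrightarrow> comm_prod G (zip (replicate n \<one>) gs) = \<one>"
proof (induction gs arbitrary: n)
  case (Cons g gs)
  then show ?case by (cases n) (auto simp: commutator_def)
qed simp

lemma comm_prod_one_right:
  "set cs \<subseteq> carrier G \<Longrightarrow> comm_prod G (zip cs (replicate n \<one>)) = \<one>"
proof (induction cs arbitrary: n)
  case (Cons c cs)
  then show ?case by (cases n) (auto simp: commutator_def)
qed simp

lemma comm_prods_subset_carrier:
  "A \<subseteq> carrier G \<Longrightarrow> set gs \<subseteq> carrier G \<Longrightarrow> comm_prods G A gs \<subseteq> carrier G"
proof
  fix x assume "A \<subseteq> carrier G" "set gs \<subseteq> carrier G" "x \<in> comm_prods G A gs"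
  then obtain cs where "set cs \<subseteq> carrier G" "x = comm_prod G (zip cs gs)"
    unfolding comm_prods_def by blast
  with \<open>set gs \<subseteq> carrier G\<close> show "x \<in> carrier G"
    using comm_prod_closed[OF set_zip_subset_times] by simp
qed

lemma comm_prods_mult:
  assumes "A \<subseteq> carrier G" "set as \<subseteq> carrier G" "set bs \<subseteq> carrier G"
    and "x \<in> comm_prods G A as" "y \<in> comm_prods G A bs"
  shows "x \<otimes> y \<in> comm_prods G A (as @ bs)"
proof -
  obtain cs ds where cs: "length cs = length as" "set cs \<subseteq> A" "x = comm_prod G (zip cs as)"
    and ds: "length ds = length bs" "set ds \<subseteq> A" "y = comm_prod G (zip ds bs)"
    using assms(4,5) unfolding comm_prods_def by blast
  have "set cs \<subseteq> carrier G" "set ds \<subseteq> carrier G"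
    using cs ds assms(1) by auto
  then have "comm_prod G (zip (cs @ ds) (as @ bs)) = x \<otimes> y"
    using cs ds assms(2,3) by (simp add: comm_prod_append set_zip_subset_times)
  then show ?thesis
    unfolding comm_prods_def using cs ds by (intro CollectI exI[of _ "cs @ ds"]) auto
qed

lemma one_in_comm_prods:
  assumes "\<one> \<in> A" "set gs \<subseteq> carrier G"
  shows "\<one> \<in> comm_prods G A gs"
  unfolding comm_prods_def using assms comm_prod_one_left
  by (intro CollectI exI[of _ "replicate (length gs) \<one>"]) auto

lemma comm_prods_subset_append:
  assumes "A \<subseteq> carrier G" "\<one> \<in> A" "set as \<subseteq> carrier G" "set bs \<subseteq> carrier G"
  shows "comm_prods G A as \<union> comm_prods G A bs \<subseteq> comm_prods G A (as @ bs)"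
proof safe
  fix x assume x: "x \<in> comm_prods G A as"
  have "x \<otimes> \<one> \<in> comm_prods G A (as @ bs)"
    by (rule comm_prods_mult[OF assms(1,3,4) x one_in_comm_prods[OF assms(2,4)]])
  then show "x \<in> comm_prods G A (as @ bs)"
    using x comm_prods_subset_carrier[OF assms(1,3)] by auto
next
  fix x assume x: "x \<in> comm_prods G A bs"
  have "\<one> \<otimes> x \<in> comm_prods G A (as @ bs)"
    by (rule comm_prods_mult[OF assms(1,3,4) one_in_comm_prods[OF assms(2,3)] x])
  then show "x \<in> comm_prods G A (as @ bs)"
    using x comm_prods_subset_carrier[OF assms(1,4)] by auto
qed

lemma commutator_in_comm_prods:
  "A \<subseteq> carrier G \<Longrightarrow> c \<in> A \<Longrightarrow> g \<in> carrier G \<Longrightarrow> commutator G c g \<in> comm_prods G A [g]"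
  unfolding comm_prods_def by (intro CollectI exI[of _ "[c]"]) auto

lemma comm_subgroup_subset_comm_prods:
  assumes N: "subgroup N G" and x: "x \<in> comm_subgroup G N (carrier G)"
  shows "\<exists>gs. set gs \<subseteq> carrier G \<and> x \<in> comm_prods G N gs"
  using x unfolding comm_subgroup_eq_generate_commutators
proof (induction rule: generate.induct)
  case one
  show ?case
    using one_in_comm_prods[of N "[]"] subgroup.one_closed[OF N] by (intro exI[of _ "[]"]) simp
next
  case (incl h)
  then obtain c g where "c \<in> N" "g \<in> carrier G" "h = commutator G c g" by blast
  then show ?case
    using commutator_in_comm_prods[OF subgroup.subset[OF N]] by (intro exI[of _ "[g]"]) simp
next
  case (inv h)
  then obtain c g where c: "c \<in> N" and g: "g \<in> carrier G" and h: "h = commutator G c g"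
    by blast
  have cG: "c \<in> carrier G" using c subgroup.subset[OF N] by blast
  have "inv h = commutator G (inv c) (c \<otimes> g \<otimes> inv c)"
    using h inv_commutator[OF cG g] by simp
  also have "\<dots> \<in> comm_prods G N [c \<otimes> g \<otimes> inv c]"
    using commutator_in_comm_prods[OF subgroup.subset[OF N] subgroup.m_inv_closed[OF N c]] cG g
    by simp
  finally show ?case using cG g by (intro exI[of _ "[c \<otimes> g \<otimes> inv c]"]) simp
next
  case (eng h1 h2)
  then obtain as bs where "set as \<subseteq> carrier G" "h1 \<in> comm_prods G N as"
    and "set bs \<subseteq> carrier G" "h2 \<in> comm_prods G N bs"
    by blast
  then show ?case
    using comm_prods_mult[OF subgroup.subset[OF N]] by (intro exI[of _ "as @ bs"]) simp
qed

lemma perfect_subgroup_uniform_comm_prods: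
  assumes N: "subgroup N G" and perfect: "comm_subgroup G N (carrier G) = N" and "finite N"
  shows "\<exists>gs. set gs \<subseteq> carrier G \<and> N \<subseteq> comm_prods G N gs"
proof -
  have "\<exists>gs. set gs \<subseteq> carrier G \<and> T \<subseteq> comm_prods G N gs" if "finite T" "T \<subseteq> N" for T
    using that
  proof (induction T rule: finite_induct)
    case empty
    show ?case by (metis empty_subsetI empty_set)
  next
    case (insert x T)
    then obtain as where as: "set as \<subseteq> carrier G" "T \<subseteq> comm_prods G N as"
      by blast
    from insert.prems have "x \<in> comm_subgroup G N (carrier G)"
      using perfect by simp
    then obtain bs where bs: "set bs \<subseteq> carrier G" "x \<in> comm_prods G N bs"
      using comm_subgroup_subset_comm_prods[OF N] by blast
    have "comm_prods G N as \<union> comm_prods G N bs \<subseteq> comm_prods G N (as @ bs)"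
      using comm_prods_subset_append[OF subgroup.subset[OF N] subgroup.one_closed[OF N] as(1) bs(1)] .
    then show ?case
      using as bs by (intro exI[of _ "as @ bs"]) auto
  qed
  then show ?thesis using assms by blast
qed

end

lemma commutator_product_group:
  assumes "\<And>i. i \<in> I \<Longrightarrow> group (G i)" "x \<in> carrier (product_group I G)" "y \<in> carrier (product_group I G)"
    and "i \<in> I"
  shows "commutator (product_group I G) x y i = commutator (G i) (x i) (y i)"
  using assms by (simp add: commutator_def PiE_iff group.inv_closed group.is_monoid monoid.m_closed)

lemma comm_prod_product_group:
  assumes grp: "\<And>i. i \<in> I \<Longrightarrow> group (G i)"
    and ps: "set ps \<subseteq> carrier (product_group I G) \<times> carrier (product_group I G)" and i: "i \<in> I"
  shows "comm_prod (product_group I G) ps i = comm_prod (G i) (map (\<lambda>(x, y). (x i, y i)) ps)"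
  using ps
proof (induction ps)
  case (Cons p ps)
  have grp_prod: "group (product_group I G)"
    using grp by simp
  obtain x y where p: "p = (x, y)" by fastforce
  have xy: "x \<in> carrier (product_group I G)" "y \<in> carrier (product_group I G)"
    using Cons.prems p by auto
  have "comm_prod (product_group I G) ps \<in> carrier (product_group I G)"
    using Cons.prems group.comm_prod_closed[OF grp_prod] by auto
  then show ?case
    using Cons xy i p commutator_product_group[OF grp xy i] by simp
qed (use i in simp)

lemma comm_prod_zip_product_group:
  assumes grp: "\<And>i. i \<in> I \<Longrightarrow> group (G i)"
    and xs: "set xs \<subseteq> carrier (product_group I G)" and ys: "set ys \<subseteq> carrier (product_group I G)"
    and i: "i \<in> I"
  shows "comm_prod (product_group I G) (zip xs ys) i
    = comm_prod (G i) (zip (map (\<lambda>x. x i) xs) (map (\<lambda>y. y i) ys))"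
  using comm_prod_product_group[OF grp set_zip_subset_times[OF xs ys] i] by (simp add: zip_map_map)

locale gstep_exhaustion =
  fixes K :: "('a, 'b) monoid_scheme" and S :: "nat \<Rightarrow> 'a set"
  assumes S_Suc_mono: "\<And>m. S m \<subseteq> S (Suc m)"
    and gstep_subset: "\<And>m. gstep K (S m) \<subseteq> S (Suc m)"
    and Union_S: "(\<Union>m. S m) = carrier K"
begin

lemma S_mono: "m \<le> n \<Longrightarrow> S m \<subseteq> S n"
  using lift_Suc_mono_le[of S, OF S_Suc_mono] .

lemma mem_S_mono: "x \<in> S m \<Longrightarrow> m \<le> n \<Longrightarrow> x \<in> S n"
  using S_mono by blast

lemma one_mem: "\<one>\<^bsub>K\<^esub> \<in> S (Suc m)"
  using gstep_subset[of m] unfolding gstep_def by blast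

lemma inv_mem: "x \<in> S m \<Longrightarrow> inv\<^bsub>K\<^esub> x \<in> S (Suc m)"
  using gstep_subset[of m] unfolding gstep_def by blast

lemma mult_mem: "x \<in> S m \<Longrightarrow> y \<in> S m \<Longrightarrow> x \<otimes>\<^bsub>K\<^esub> y \<in> S (Suc m)"
  using gstep_subset[of m] unfolding gstep_def by blast

lemma finite_subset_S:
  assumes "finite T" "T \<subseteq> carrier K"
  shows "\<exists>m. T \<subseteq> S m"
  using assms
proof (induction T rule: finite_induct)
  case (insert x T)
  then obtain m n where "T \<subseteq> S m" "x \<in> S n"
    using Union_S by blast
  then have "insert x T \<subseteq> S (max m n)"
    using S_mono[of m "max m n"] S_mono[of n "max m n"] by auto
  then show ?case ..
qed simp

lemma commutator_mem:
  assumes "x \<in> S m" "y \<in> S m"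
  shows "commutator K x y \<in> S (m + 3)"
proof -
  have "x \<otimes>\<^bsub>K\<^esub> y \<otimes>\<^bsub>K\<^esub> inv\<^bsub>K\<^esub> x \<in> S (Suc (Suc m))"
    using assms by (intro mult_mem) (auto intro: inv_mem mult_mem)
  moreover have "inv\<^bsub>K\<^esub> y \<in> S (Suc (Suc m))"
    using inv_mem[OF assms(2)] S_Suc_mono by blast
  ultimately show ?thesis
    unfolding commutator_def using mult_mem by (simp add: numeral_3_eq_3)
qed

lemma comm_prod_mem:
  "set ps \<subseteq> S m \<times> S m \<Longrightarrow> comm_prod K ps \<in> S (m + 3 + length ps)"
proof (induction ps)
  case Nil
  show ?case using one_mem S_mono[of "Suc m" "m + 3"] by auto
next
  case (Cons p ps)
  obtain x y where p: "p = (x, y)" by fastforce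
  have "commutator K x y \<in> S (m + 3 + length ps)"
    using Cons.prems p commutator_mem S_mono[of "m + 3" "m + 3 + length ps"] by auto
  moreover have "comm_prod K ps \<in> S (m + 3 + length ps)"
    using Cons by simp
  ultimately have "commutator K x y \<otimes>\<^bsub>K\<^esub> comm_prod K ps \<in> S (Suc (m + 3 + length ps))"
    by (rule mult_mem)
  then show ?case
    using p by simp
qed

end

locale power_exhaustion = G: group G + gstep_exhaustion "product_group I (\<lambda>_. G)" S
  for G :: "('a, 'b) monoid_scheme" and I :: "'i set" and S :: "nat \<Rightarrow> ('i \<Rightarrow> 'a) set" +
  assumes finite_carrier: "finite (carrier G)"
begin

abbreviation H :: "('i \<Rightarrow> 'a) monoid" where "H \<equiv> product_group I (\<lambda>_. G)"

abbreviation N :: "'a set" where "N \<equiv> lcs_last G"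

lemma group_H: "group H"
  by (simp add: G.is_group)

lemma subgroup_N: "subgroup N G"
  using G.subgroup_lcs_last[OF finite_carrier] .

lemma N_subset_carrier: "N \<subseteq> carrier G"
  using subgroup.subset[OF subgroup_N] .

lemma one_in_N: "\<one>\<^bsub>G\<^esub> \<in> N"
  using subgroup.one_closed[OF subgroup_N] .

lemma finite_N: "finite N"
  using finite_subset[OF N_subset_carrier finite_carrier] .

definition proj :: "'i set \<Rightarrow> ('i \<Rightarrow> 'a) \<Rightarrow> 'i \<Rightarrow> 'a" where
  "proj A x = (\<lambda>i\<in>I. if i \<in> A then x i else \<one>\<^bsub>G\<^esub>)"

definition block :: "'i set \<Rightarrow> ('i \<Rightarrow> 'a) set" where
  "block A = (\<Pi>\<^sub>E i\<in>I. if i \<in> A then N else {\<one>\<^bsub>G\<^esub>})"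

definition reached :: "'i set \<Rightarrow> bool" where
  "reached A \<longleftrightarrow> (\<exists>m. block A \<subseteq> S m)"

lemma proj_mult_proj_Compl: "x \<in> carrier H \<Longrightarrow> proj A x \<otimes>\<^bsub>H\<^esub> proj (- A) x = x"
  by (force simp: proj_def PiE_iff intro: extensionalityI[of _ I])

lemma block_subset_carrier: "block A \<subseteq> carrier H"
  unfolding block_def carrier_product_group using N_subset_carrier by (intro PiE_mono) auto

lemma block_mono: "A \<inter> I \<subseteq> B \<Longrightarrow> block A \<subseteq> block B"
  unfolding block_def using one_in_N by (intro PiE_mono) auto

lemma proj_in_block: "x \<in> block B \<Longrightarrow> proj A x \<in> block (A \<inter> B)"
  using one_in_N by (auto simp: proj_def block_def PiE_iff)

lemma proj_block: "x \<in> block A \<Longrightarrow> proj A x = x"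
  by (force simp: proj_def block_def PiE_iff intro: extensionalityI[of _ I])

lemma block_Un_subset:
  assumes "block A \<subseteq> S m" "block B \<subseteq> S m"
  shows "block (A \<union> B) \<subseteq> S (Suc m)"
proof
  fix x assume x: "x \<in> block (A \<union> B)"
  have "proj A x \<in> block (A \<inter> (A \<union> B))"
    by (rule proj_in_block[OF x])
  also have "\<dots> \<subseteq> block A"
    by (rule block_mono) blast
  finally have "proj A x \<in> S m"
    using assms(1) by blast
  have "proj (- A) x \<in> block (- A \<inter> (A \<union> B))"
    by (rule proj_in_block[OF x])
  also have "\<dots> \<subseteq> block B"
    by (rule block_mono) blast
  finally have "proj (- A) x \<in> S m"
    using assms(2) by blast
  with \<open>proj A x \<in> S m\<close> have "proj A x \<otimes>\<^bsub>H\<^esub> proj (- A) x \<in> S (Suc m)"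
    by (rule mult_mem)
  moreover have "x \<in> carrier H"
    using x block_subset_carrier by blast
  ultimately show "x \<in> S (Suc m)"
    by (simp only: proj_mult_proj_Compl)
qed

lemma reached_subset: "reached A \<Longrightarrow> B \<inter> I \<subseteq> A \<Longrightarrow> reached B"
  unfolding reached_def using block_mono by blast

lemma reached_Un:
  assumes "reached A" "reached B"
  shows "reached (A \<union> B)"
proof -
  obtain m n where "block A \<subseteq> S m" "block B \<subseteq> S n"
    using assms unfolding reached_def by blast
  then have "block A \<subseteq> S (max m n)" "block B \<subseteq> S (max m n)"
    using S_mono[of m "max m n"] S_mono[of n "max m n"] by auto
  then show ?thesis
    unfolding reached_def using block_Un_subset by blast
qed

lemma reached_empty: "reached {}"
proof -
  have "block {} = {\<one>\<^bsub>H\<^esub>}"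
    by (simp add: block_def PiE_eq_singleton)
  then show ?thesis
    unfolding reached_def using one_mem[of 0] by (intro exI[of _ 1]) simp
qed

lemma reached_Union: "finite F \<Longrightarrow> (\<And>A. A \<in> F \<Longrightarrow> reached A) \<Longrightarrow> reached (\<Union>F)"
  by (induction F rule: finite_induct) (auto intro: reached_Un reached_empty)

lemma proj_const_closed: "g \<in> carrier G \<Longrightarrow> proj A (\<lambda>_. g) \<in> carrier H"
  by (auto simp: proj_def PiE_iff)

lemma proj_consts_bounded: "\<exists>m. \<forall>g\<in>carrier G. proj A (\<lambda>_. g) \<in> S m"
proof -
  obtain m where "(\<lambda>g. proj A (\<lambda>_. g)) ` carrier G \<subseteq> S m"
    using finite_subset_S finite_carrier proj_const_closed by (metis finite_imageI image_subsetI)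
  then show ?thesis by blast
qed

lemma unreached_fibre:
  assumes R: "\<not> reached R" and y: "y \<in> block R"
  shows "\<exists>n\<in>N. \<not> reached {i \<in> R. y i = n}"
proof (rule ccontr)
  assume "\<not> ?thesis"
  then have "reached (\<Union>n\<in>N. {i \<in> R. y i = n})"
    using finite_N by (intro reached_Union) auto
  moreover have "R \<inter> I \<subseteq> (\<Union>n\<in>N. {i \<in> R. y i = n})"
    using y by (auto simp: block_def PiE_iff)
  ultimately show False
    using R reached_subset by blast
qed

lemma mult_inv_proj_const_in_block:
  assumes y: "y \<in> block R" and n: "n \<in> N"
  shows "y \<otimes>\<^bsub>H\<^esub> inv\<^bsub>H\<^esub> proj R (\<lambda>_. n) \<in> block (R - {i \<in> R. y i = n})"
proof -
  have nG: "n \<in> carrier G"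
    using n N_subset_carrier by blast
  have "y i \<otimes>\<^bsub>G\<^esub> inv\<^bsub>G\<^esub> (if i \<in> R then n else \<one>\<^bsub>G\<^esub>) \<in> (if i \<in> R - {i \<in> R. y i = n} then N else {\<one>\<^bsub>G\<^esub>})"
    if i: "i \<in> I" for i
  proof -
    have yi: "y i \<in> (if i \<in> R then N else {\<one>\<^bsub>G\<^esub>})"
      using y i by (auto simp: block_def PiE_iff)
    show ?thesis
      using yi nG n N_subset_carrier subgroup.m_closed[OF subgroup_N] subgroup.m_inv_closed[OF subgroup_N]
      by (auto simp: G.r_inv)
  qed
  moreover have "proj R (\<lambda>_. n) \<in> carrier H"
    using proj_const_closed[OF nG] .
  ultimately show ?thesis
    using G.is_group by (auto simp: block_def proj_def PiE_iff)
qed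

lemma unreached_split:
  assumes R: "\<not> reached R"
  shows "\<exists>F\<subseteq>R. \<not> reached F \<and> \<not> block (R - F) \<subseteq> S m"
proof (rule ccontr)
  assume "\<not> ?thesis"
  then have split: "block (R - F) \<subseteq> S m" if "F \<subseteq> R" "\<not> reached F" for F
    using that by blast
  interpret H: group H by (rule group_H)
  obtain s where s: "\<forall>g\<in>carrier G. proj R (\<lambda>_. g) \<in> S s"
    using proj_consts_bounded by blast
  have "block R \<subseteq> S (Suc (max m s))"
  proof
    fix y assume y: "y \<in> block R"
    then obtain n where n: "n \<in> N" and F: "\<not> reached {i \<in> R. y i = n}"
      using unreached_fibre[OF R] by blast
    let ?c = "proj R (\<lambda>_. n)"
    have nG: "n \<in> carrier G"
      using n N_subset_carrier by blast
    have cH: "?c \<in> carrier H"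
      using proj_const_closed[OF nG] .
    have yH: "y \<in> carrier H"
      using y block_subset_carrier by blast
    have "y \<otimes>\<^bsub>H\<^esub> inv\<^bsub>H\<^esub> ?c \<in> S m"
      using mult_inv_proj_const_in_block[OF y n] split[of "{i \<in> R. y i = n}"] F by blast
    then have "y \<otimes>\<^bsub>H\<^esub> inv\<^bsub>H\<^esub> ?c \<in> S (max m s)"
      by (rule mem_S_mono) simp
    moreover have "?c \<in> S (max m s)"
      using s nG by (auto intro: mem_S_mono[of _ s])
    ultimately have "y \<otimes>\<^bsub>H\<^esub> inv\<^bsub>H\<^esub> ?c \<otimes>\<^bsub>H\<^esub> ?c \<in> S (Suc (max m s))"
      by (rule mult_mem)
    also have "y \<otimes>\<^bsub>H\<^esub> inv\<^bsub>H\<^esub> ?c \<otimes>\<^bsub>H\<^esub> ?c = y"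
      using yH cH by (simp only: H.m_assoc H.l_inv H.r_one H.inv_closed)
    finally show "y \<in> S (Suc (max m s))" .
  qed
  then show False
    using R unfolding reached_def by blast
qed

lemma unreached_disjoint_family:
  assumes "\<not> reached I"
  shows "\<exists>E :: nat \<Rightarrow> 'i set. disjoint_family E \<and> (\<forall>j. \<not> reached (E j))"
proof -
  obtain r where r: "\<And>k. \<not> reached (r k)"
    and r_Suc: "\<And>k. r (Suc k) \<subseteq> r k" and D: "\<And>k. \<not> block (r k - r (Suc k)) \<subseteq> S k"
    using dependent_nat_choice[of "\<lambda>_ R. \<not> reached R" "\<lambda>k R F. F \<subseteq> R \<and> \<not> block (R - F) \<subseteq> S k"]
      assms unreached_split by metis
  define D where "D k = r k - r (Suc k)" for k
  have "disjoint_family (\<lambda>k. (- r (Suc k)) - (- r k))"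
    using r_Suc by (intro disjoint_family_Suc) blast
  then have disj_D: "disjoint_family D"
    unfolding D_def by (simp add: Diff_eq Int_commute)
  \<comment> \<open>each \<open>E j\<close> contains \<open>D k\<close> for arbitrarily large \<open>k\<close>\<close>
  define E where "E j = (\<Union>i. D (prod_encode (j, i)))" for j
  have "disjoint_family E"
    unfolding disjoint_family_on_def
  proof (intro ballI impI)
    fix j j' :: nat assume "j \<noteq> j'"
    then have "D (prod_encode (j, i)) \<inter> D (prod_encode (j', i')) = {}" for i i'
      using disj_D by (simp add: disjoint_family_on_def)
    then show "E j \<inter> E j' = {}"
      unfolding E_def by blast
  qed
  moreover have "\<not> reached (E j)" for j
  proof
    assume "reached (E j)"
    then obtain p where p: "block (E j) \<subseteq> S p"
      unfolding reached_def by blast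
    define k where "k = prod_encode (j, p)"
    have "block (D k) \<subseteq> block (E j)"
      unfolding E_def k_def by (rule block_mono) blast
    also have "\<dots> \<subseteq> S k"
      using p S_mono[of p k] unfolding k_def by (simp add: le_prod_encode_2)
    finally show False
      using D unfolding D_def by blast
  qed
  ultimately show ?thesis by blast
qed

lemma glue_blocks:
  assumes disj: "disjoint_family E" and y: "\<And>j. y j \<in> block (E j)"
  shows "\<exists>w\<in>\<Pi>\<^sub>E i\<in>I. N. \<forall>j. proj (E j) w = y j"
proof -
  define w where "w = (\<lambda>i\<in>I. if \<exists>j. i \<in> E j then y (SOME j. i \<in> E j) i else \<one>\<^bsub>G\<^esub>)"
  have index: "(SOME j. i \<in> E j) = j" if "i \<in> E j" for i j
    using disj that someI[of "\<lambda>j. i \<in> E j"] unfolding disjoint_family_on_def by blast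
  have "w i \<in> N" if i: "i \<in> I" for i
  proof (cases "\<exists>j. i \<in> E j")
    case True
    then obtain j where "i \<in> E j" by blast
    then show ?thesis
      using y[of j] i by (auto simp: w_def index block_def PiE_iff)
  next
    case False
    then show ?thesis
      using i one_in_N by (simp add: w_def)
  qed
  then have "w \<in> (\<Pi>\<^sub>E i\<in>I. N)"
    by (simp add: w_def PiE_iff)
  moreover have "proj (E j) w = y j" for j
  proof -
    have "proj (E j) w = proj (E j) (y j)"
      by (auto simp: proj_def w_def index)
    then show ?thesis using proj_block[OF y] by simp
  qed
  ultimately show ?thesis by blast
qed

lemma proj_eq_comm_prod:
  assumes gs: "set gs \<subseteq> carrier G" "N \<subseteq> comm_prods G N gs" and w: "w \<in> (\<Pi>\<^sub>E i\<in>I. N)"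
  shows "\<exists>Zs. set Zs \<subseteq> carrier H \<and> length Zs = length gs \<and>
           (\<forall>A. proj A w = comm_prod H (zip Zs (map (\<lambda>g. proj A (\<lambda>_. g)) gs)))"
proof -
  have "\<forall>i\<in>I. \<exists>cs. length cs = length gs \<and> set cs \<subseteq> N \<and> w i = comm_prod G (zip cs gs)"
    using w gs(2) unfolding comm_prods_def by blast
  then obtain cs where cs: "\<And>i. i \<in> I \<Longrightarrow> length (cs i) = length gs \<and> set (cs i) \<subseteq> N \<and> w i = comm_prod G (zip (cs i) gs)"
    by metis
  define Zs where "Zs = map (\<lambda>l. \<lambda>i\<in>I. cs i ! l) [0..<length gs]"
  have Zs_carrier: "set Zs \<subseteq> carrier H"
    using cs N_subset_carrier by (fastforce simp: Zs_def PiE_iff)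
  have "proj A w = comm_prod H (zip Zs (map (\<lambda>g. proj A (\<lambda>_. g)) gs))" for A
  proof (rule extensionalityI[of _ I])
    have gs_H: "set (map (\<lambda>g. proj A (\<lambda>_. g)) gs) \<subseteq> carrier H"
      using gs(1) proj_const_closed by auto
    then show "comm_prod H (zip Zs (map (\<lambda>g. proj A (\<lambda>_. g)) gs)) \<in> extensional I"
      using group.comm_prod_closed[OF group_H set_zip_subset_times[OF Zs_carrier]]
      by (auto simp: PiE_iff)
    fix i assume i: "i \<in> I"
    have "map (\<lambda>Z. Z i) Zs = cs i"
      using cs[OF i] i by (auto simp: Zs_def intro: nth_equalityI)
    then have "comm_prod H (zip Zs (map (\<lambda>g. proj A (\<lambda>_. g)) gs)) i
        = comm_prod G (zip (cs i) (map (\<lambda>g. proj A (\<lambda>_. g) i) gs))"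
      using comm_prod_zip_product_group[OF G.is_group Zs_carrier gs_H i] by (simp add: o_def)
    also have "\<dots> = proj A w i"
    proof (cases "i \<in> A")
      case True
      then show ?thesis using cs[OF i] i by (simp add: proj_def)
    next
      case False
      then have "map (\<lambda>g. proj A (\<lambda>_. g) i) gs = replicate (length gs) \<one>\<^bsub>G\<^esub>"
        using i by (simp add: proj_def map_replicate_const)
      moreover have "set (cs i) \<subseteq> carrier G"
        using cs[OF i] N_subset_carrier by blast
      ultimately show ?thesis
        using False i G.comm_prod_one_right by (simp add: proj_def)
    qed
    finally show "proj A w i = comm_prod H (zip Zs (map (\<lambda>g. proj A (\<lambda>_. g)) gs)) i" ..
  qed (simp add: proj_def)
  then show ?thesis
    using Zs_carrier by (intro exI[of _ Zs]) (simp add: Zs_def)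
qed

lemma disjoint_family_reached:
  fixes E :: "nat \<Rightarrow> 'i set"
  assumes disj: "disjoint_family E"
  shows "\<exists>j. reached (E j)"
proof (rule ccontr)
  assume "\<nexists>j. reached (E j)"
  obtain gs where gs: "set gs \<subseteq> carrier G" "N \<subseteq> comm_prods G N gs"
    using G.perfect_subgroup_uniform_comm_prods[OF subgroup_N G.lcs_last_perfect[OF finite_carrier] finite_N]
    by blast
  have "\<forall>j. \<exists>m. \<forall>g\<in>carrier G. proj (E j) (\<lambda>_. g) \<in> S m"
    using proj_consts_bounded by blast
  then obtain s where s: "\<And>j g. g \<in> carrier G \<Longrightarrow> proj (E j) (\<lambda>_. g) \<in> S (s j)"
    by metis
  \<comment> \<open>the level to which \<open>comm_prod_mem\<close> lifts \<open>y j\<close> once all \<open>Zs\<close> lie in \<open>S j\<close>\<close>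
  define bound where "bound j = max j (s j) + 3 + length gs" for j
  have "\<forall>j. \<exists>y. y \<in> block (E j) \<and> y \<notin> S (bound j)"
    using \<open>\<nexists>j. reached (E j)\<close> unfolding reached_def by blast
  then obtain y where y: "\<And>j. y j \<in> block (E j)" and y_not: "\<And>j. y j \<notin> S (bound j)"
    by metis
  obtain w where w: "w \<in> (\<Pi>\<^sub>E i\<in>I. N)" "\<And>j. proj (E j) w = y j"
    using glue_blocks[OF disj y] by blast
  obtain Zs where Zs: "set Zs \<subseteq> carrier H" "length Zs = length gs"
    and w_eq: "\<And>A. proj A w = comm_prod H (zip Zs (map (\<lambda>g. proj A (\<lambda>_. g)) gs))"
    using proj_eq_comm_prod[OF gs w(1)] by blast
  obtain q where q: "set Zs \<subseteq> S q"
    using finite_subset_S[OF _ Zs(1)] by blast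
  let ?m = "max q (s q)"
  have "proj (E q) (\<lambda>_. g) \<in> S ?m" if "g \<in> set gs" for g
    using s[of g q] that gs(1) S_mono[of "s q" ?m] by auto
  then have "set (zip Zs (map (\<lambda>g. proj (E q) (\<lambda>_. g)) gs)) \<subseteq> S ?m \<times> S ?m"
    using q S_mono[of q ?m] by (intro set_zip_subset_times) auto
  then have "comm_prod H (zip Zs (map (\<lambda>g. proj (E q) (\<lambda>_. g)) gs)) \<in> S (bound q)"
    using comm_prod_mem Zs(2) unfolding bound_def by fastforce
  then show False
    using y_not[of q] w_eq[of "E q"] w(2)[of q] by simp
qed

lemma reached_I: "reached I"
  using unreached_disjoint_family disjoint_family_reached by blast

end

theorem mainTheorem9:
  fixes G :: "('a, 'b) monoid_scheme" and I :: "'i set" and S :: "nat \<Rightarrow> ('i \<Rightarrow> 'a) set"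
  assumes "group G" and "finite (carrier G)"
    and "\<And>m. S m \<subseteq> carrier (product_group I (\<lambda>_. G))"
    and "\<And>m. S m \<subseteq> S (Suc m)"
    and "\<And>m. gstep (product_group I (\<lambda>_. G)) (S m) \<subseteq> S (Suc m)"
    and "(\<Union>m. S m) = carrier (product_group I (\<lambda>_. G))"
  shows "\<exists>M. \<forall>m\<ge>M. (\<Pi>\<^sub>E i\<in>I. lcs_last G) \<subseteq> S m"
proof -
  \<comment> \<open>the third hypothesis follows from the last one\<close>
  interpret power_exhaustion G I S
    unfolding power_exhaustion_def power_exhaustion_axioms_def gstep_exhaustion_def
    using assms(1,2,4-6) by blast
  obtain M where "block I \<subseteq> S M"
    using reached_I unfolding reached_def by blast
  moreover have "block I = (\<Pi>\<^sub>E i\<in>I. lcs_last G)"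
    unfolding block_def by (rule PiE_cong) simp
  ultimately show ?thesis
    using S_mono by blast
qed

end
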